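(* Let $A=(a_{ij})\in M(m,\mathbb{C})$ and let $X_A$ be a complex algebra spanned by elements $\{x_{ij}:i,j=1,\ldots,m\}$ satisfying $x_{ij}x_{kl}=a_{jk}x_{il}$. If $X_A$ is semisimple and $\det A=0$, then the elements $\{x_{ij}:i,j=1,\ldots,m\}$ are linearly dependent. *)

theory Defs
  imports "HOL-Analysis.Analysis"
begin

text \<open>A (possibly non-unital) associative complex algebra: the carrier is the whole
  type 'a (an associative ring without unit), s is the complex scalar multiplication.\<close>
definition complex_algebra :: "(complex \<Rightarrow> 'a::ring \<Rightarrow> 'a) \<Rightarrow> bool" where
  "complex_algebra s \<longleftrightarrow> vector_space s \<and>
     (\<forall>c x y. s c (x * y) = s c x * y \<and> s c (x * y) = x * s c y)"

definition algebra_ideal :: "(complex \<Rightarrow> 'a::ring \<Rightarrow> 'a) \<Rightarrow> 'a set \<Rightarrow> bool" where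
  "algebra_ideal s I \<longleftrightarrow> module.subspace s I \<and>
     (\<forall>x\<in>I. \<forall>a. a * x \<in> I \<and> x * a \<in> I)"

text \<open>set_pow I n = set of all products of n+1 elements of I.\<close>
fun set_pow :: "'a::times set \<Rightarrow> nat \<Rightarrow> 'a set" where
  "set_pow I 0 = I"
| "set_pow I (Suc n) = {x * y | x y. x \<in> set_pow I n \<and> y \<in> I}"

definition nilpotent_set :: "'a::{times,zero} set \<Rightarrow> bool" where
  "nilpotent_set I \<longleftrightarrow> (\<exists>n. set_pow I n \<subseteq> {0})"

text \<open>Semisimple: the (Jacobson) radical, i.e. for a finite-dimensional algebra the
  largest nilpotent ideal, vanishes; equivalently there is no nonzero nilpotent ideal.\<close>
definition semisimple_algebra :: "(complex \<Rightarrow> 'a::ring \<Rightarrow> 'a) \<Rightarrow> bool" where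
  "semisimple_algebra s \<longleftrightarrow>
     (\<forall>I. algebra_ideal s I \<and> nilpotent_set I \<longrightarrow> I = {0})"

end

theory Submission
  imports Defs
begin

text \<open>Since \<open>det A = 0\<close> there is a row vector \<open>u \<noteq> 0\<close> with \<open>u A = 0\<close>. For a fixed
  row index \<open>i\<close>, the element \<open>y = \<Sum>\<^sub>j u\<^sub>j x\<^sub>i\<^sub>j\<close> satisfies \<open>y x\<^sub>k\<^sub>l = (u A)\<^sub>k x\<^sub>i\<^sub>l = 0\<close>, so \<open>y\<close>
  annihilates the whole algebra from the left. The left annihilator is an ideal
  whose square is zero, hence it vanishes in a semisimple algebra; so \<open>y = 0\<close>,
  a nontrivial linear relation among the \<open>x\<^sub>i\<^sub>j\<close>.\<close>

lemma complex_algebraD: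
  assumes "complex_algebra s"
  shows "vector_space s"
    and "s c (a * b) = s c a * b"
    and "s c (a * b) = a * s c b"
  using assms unfolding complex_algebra_def by metis+

lemma det_zero_obtains_left_kernel:
  fixes A :: "'a::field^'n^'n"
  assumes "det A = 0"
  obtains u where "u \<noteq> 0" and "u v* A = 0"
proof -
  have "\<not> invertible (transpose A)"
    using assms invertible_det_nz[of "transpose A"] by (simp add: det_transpose)
  then obtain u where "u \<noteq> 0" and "transpose A *v u = 0"
    unfolding invertible_left_inverse matrix_left_invertible_ker by blast
  then show thesis using that by simp
qed

definition left_annihilator :: "'a::ring set" where
  "left_annihilator = {a. \<forall>b. a * b = 0}"

lemma algebra_ideal_left_annihilator:
  assumes "complex_algebra s"
  shows "algebra_ideal s left_annihilator"
proof -
  interpret vector_space s using complex_algebraD(1)[OF assms] .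
  show ?thesis
    unfolding algebra_ideal_def subspace_def left_annihilator_def
    by (auto simp: distrib_right complex_algebraD(2)[OF assms, symmetric] mult.assoc)
qed

lemma nilpotent_set_left_annihilator: "nilpotent_set left_annihilator"
  unfolding nilpotent_set_def
  by (rule exI[of _ 1]) (auto simp: left_annihilator_def)

lemma semisimple_left_annihilator_eq_zero:
  fixes s :: "complex \<Rightarrow> 'a::ring \<Rightarrow> 'a"
  assumes "complex_algebra s" and "semisimple_algebra s"
  shows "left_annihilator = {0 :: 'a}"
  using assms(2) algebra_ideal_left_annihilator[OF assms(1)]
    nilpotent_set_left_annihilator[where 'a = 'a]
  unfolding semisimple_algebra_def by blast

lemma left_annihilator_if_annihilates_spanning_set:
  assumes "complex_algebra s" and "module.span s G = UNIV"
    and "\<And>g. g \<in> G \<Longrightarrow> a * g = 0"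
  shows "a \<in> left_annihilator"
proof -
  interpret vector_space s using complex_algebraD(1)[OF assms(1)] .
  have "a * b = 0" for b
  proof -
    have "b \<in> span G" using assms(2) by simp
    then show ?thesis
    proof (induct rule: span_induct_alt)
      case base
      then show ?case by simp
    next
      case (step c g z)
      then show ?case
        using assms(3) by (simp add: distrib_left flip: complex_algebraD(3)[OF assms(1)])
    qed
  qed
  then show ?thesis unfolding left_annihilator_def by simp
qed

lemma row_combination_mult:
  fixes A :: "complex^'n^'n" and x :: "'n \<Rightarrow> 'n \<Rightarrow> 'a::ring"
  assumes alg: "complex_algebra s"
    and rel: "\<forall>i j k l. x i j * x k l = s (A $ j $ k) (x i l)"
  shows "(\<Sum>j\<in>UNIV. s (u $ j) (x i j)) * x k l = s ((u v* A) $ k) (x i l)"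
proof -
  interpret vector_space s using complex_algebraD(1)[OF alg] .
  have "(\<Sum>j\<in>UNIV. s (u $ j) (x i j)) * x k l = (\<Sum>j\<in>UNIV. s (u $ j) (x i j * x k l))"
    by (simp add: sum_distrib_right complex_algebraD(2)[OF alg])
  also have "\<dots> = (\<Sum>j\<in>UNIV. s (u $ j * A $ j $ k) (x i l))"
    using rel by simp
  also have "\<dots> = s ((u v* A) $ k) (x i l)"
    by (simp add: vector_matrix_mult_def scale_sum_left)
  finally show ?thesis .
qed

theorem corollary33:
  fixes A :: "complex^'n^'n"
    and x :: "'n \<Rightarrow> 'n \<Rightarrow> 'a::ring"
    and s :: "complex \<Rightarrow> 'a \<Rightarrow> 'a"
  assumes alg: "complex_algebra s"
    and span: "module.span s {x i j | i j. True} = UNIV"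
    and rel: "\<forall>i j k l. x i j * x k l = s (A $ j $ k) (x i l)"
    and ss: "semisimple_algebra s"
    and det0: "det A = 0"
  shows "\<exists>c :: 'n \<Rightarrow> 'n \<Rightarrow> complex. (\<exists>i j. c i j \<noteq> 0) \<and>
           (\<Sum>i\<in>UNIV. \<Sum>j\<in>UNIV. s (c i j) (x i j)) = 0"
proof -
  interpret vector_space s using complex_algebraD(1)[OF alg] .
  obtain u where u0: "u \<noteq> 0" and uA: "u v* A = 0"
    using det_zero_obtains_left_kernel[OF det0] .
  fix i0 :: 'n
  define y where "y = (\<Sum>j\<in>UNIV. s (u $ j) (x i0 j))"
  have "y * x k l = 0" for k l
    unfolding y_def row_combination_mult[OF alg rel] uA by simp
  then have "y \<in> left_annihilator"
    using left_annihilator_if_annihilates_spanning_set[OF alg span] by blast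
  then have y0: "y = 0"
    using semisimple_left_annihilator_eq_zero[OF alg ss] by blast
  define c where "c = (\<lambda>i j. if i = i0 then u $ j else 0)"
  obtain j where "u $ j \<noteq> 0" using u0 by (metis vec_eq_iff zero_index)
  then have "c i0 j \<noteq> 0" by (simp add: c_def)
  moreover have "(\<Sum>i\<in>UNIV. \<Sum>j\<in>UNIV. s (c i j) (x i j)) = y"
  proof -
    have "(\<Sum>j\<in>UNIV. s (c i j) (x i j)) = (if i = i0 then y else 0)" for i
      by (simp add: c_def y_def)
    then show ?thesis by simp
  qed
  ultimately show ?thesis using y0 by auto
qed

end
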